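(* Let $(Q,\mathcal Q)$ and $(\Delta,\mathcal D)$ be measurable spaces and $f:Q\to Q$, $g:Q\to\Delta$ measurable maps. Consider the generator $[(Q,\mathcal Q),T,(\Delta,\mathcal D)]$ defined by $T(x,\cdot):=\delta_{(f(x),\,g(f(x)))}$, i.e. $T(x,A\times B)=1$ if $f(x)\in A$ and $g(f(x))\in B$, and $0$ otherwise. Then $$\sigma_Q(T)=\sigma(g\circ f,\,g\circ f^2,\,g\circ f^3,\dots),$$ the $\sigma$-algebra on $Q$ generated by the maps $g\circ f^k$, $k\ge1$.
   Context: A generator $[(Q,\mathcal Q),T,(\Delta,\mathcal D)]$ consists of measurable spaces $(Q,\mathcal Q)$ and $(\Delta,\mathcal D)$ and a Markov transition kernel $T$ from $(Q,\mathcal Q)$ to $(Q\times\Delta,\mathcal Q\otimes\mathcal D)$. For such a generator, $\sigma_Q(T)$ denotes the smallest $\sigma$-subalgebra $\mathcal A$ of $\mathcal Q$ such that for every $C\in\mathcal A\otimes\mathcal D$ the function $x\mapsto T(x,C)$ is $\mathcal A$-measurable (equivalently, the intersection of all $\sigma$-subalgebras of $\mathcal Q$ with this property). *)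

theory Defs
  imports "HOL-Probability.Probability"
begin

text \<open>A transition kernel from Q to Q x D is modelled as a function
  T :: 'q => ('q * 'd) measure; T(x,C) is emeasure (T x) C.
  sigmaQ Q D T is the intersection of all sigma-subalgebras A of sets Q
  such that for every C in A (x) D the map x |-> T(x,C) is A-measurable.\<close>

definition kernel_invariant_subalgebra ::
  "'q measure \<Rightarrow> 'd measure \<Rightarrow> ('q \<Rightarrow> ('q \<times> 'd) measure) \<Rightarrow> 'q set set \<Rightarrow> bool" where
  "kernel_invariant_subalgebra Q D T A \<longleftrightarrow>
     sigma_algebra (space Q) A \<and> A \<subseteq> sets Q \<and>
     (\<forall>C \<in> sets (sigma (space Q) A \<Otimes>\<^sub>M D).
        (\<lambda>x. emeasure (T x) C) \<in> borel_measurable (sigma (space Q) A))"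

definition sigmaQ ::
  "'q measure \<Rightarrow> 'd measure \<Rightarrow> ('q \<Rightarrow> ('q \<times> 'd) measure) \<Rightarrow> 'q set set" where
  "sigmaQ Q D T = \<Inter> {A. kernel_invariant_subalgebra Q D T A}"

end

theory Submission
  imports Defs
begin

text \<open>For a deterministic kernel \<open>T x = \<delta>\<^bsub>h x\<^esub>\<close>, \<open>T(x, C)\<close> is the indicator of \<open>h\<^sup>-\<^sup>1 C\<close>,
  so a sub-\<open>\<sigma>\<close>-algebra \<open>\<A>\<close> is kernel-invariant exactly when \<open>h\<close> is \<open>\<A>/\<A> \<otimes> \<D>\<close>-measurable.
  For \<open>h = (f, g \<circ> f)\<close> this means that \<open>\<A>\<close> is invariant under \<open>f\<^sup>-\<^sup>1\<close> and makes \<open>g \<circ> f\<close>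
  measurable; the smallest such \<open>\<sigma>\<close>-algebra is generated by the maps \<open>g \<circ> f\<^sup>k\<close>, \<open>k \<ge> 1\<close>,
  since \<open>f\<^sup>-\<^sup>1\<close> shifts the generator for \<open>k\<close> to the one for \<open>k + 1\<close>.\<close>

lemma sigmaQ_eqI:
  assumes "kernel_invariant_subalgebra Q D T A"
    and "\<And>B. kernel_invariant_subalgebra Q D T B \<Longrightarrow> A \<subseteq> B"
  shows "sigmaQ Q D T = A"
  using assms unfolding sigmaQ_def by blast

lemma kernel_invariant_subalgebra_return_iff:
  assumes h: "h \<in> Q \<rightarrow>\<^sub>M Q \<Otimes>\<^sub>M D"
  shows "kernel_invariant_subalgebra Q D (\<lambda>x. return (Q \<Otimes>\<^sub>M D) (h x)) A \<longleftrightarrow>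
    sigma_algebra (space Q) A \<and> A \<subseteq> sets Q \<and>
    h \<in> sigma (space Q) A \<rightarrow>\<^sub>M sigma (space Q) A \<Otimes>\<^sub>M D"
proof (cases "sigma_algebra (space Q) A \<and> A \<subseteq> sets Q")
  case False
  then show ?thesis
    unfolding kernel_invariant_subalgebra_def by blast
next
  case True
  let ?M = "sigma (space Q) A"
  have sets_M: "sets ?M = A" and space_M: "space ?M = space Q"
    using True by (simp_all add: sigma_algebra.sets_measure_of_eq sigma_algebra.space_measure_of_eq)
  have "sets (?M \<Otimes>\<^sub>M D) \<subseteq> sets (Q \<Otimes>\<^sub>M D)"
    by (rule sets_pair_in_sets) (use sets_M True in auto)
  then have emeasure_eq: "emeasure (return (Q \<Otimes>\<^sub>M D) (h x)) C = indicator C (h x)"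
    if "C \<in> sets (?M \<Otimes>\<^sub>M D)" for x C
    using that by auto
  have "(\<forall>C \<in> sets (?M \<Otimes>\<^sub>M D).
          (\<lambda>x. emeasure (return (Q \<Otimes>\<^sub>M D) (h x)) C) \<in> borel_measurable ?M) \<longleftrightarrow>
        h \<in> ?M \<rightarrow>\<^sub>M ?M \<Otimes>\<^sub>M D"
  proof
    assume kernel_measurable: "\<forall>C \<in> sets (?M \<Otimes>\<^sub>M D).
      (\<lambda>x. emeasure (return (Q \<Otimes>\<^sub>M D) (h x)) C) \<in> borel_measurable ?M"
    show "h \<in> ?M \<rightarrow>\<^sub>M ?M \<Otimes>\<^sub>M D"
    proof (rule measurable_pair_measureI)
      show "h \<in> space ?M \<rightarrow> space ?M \<times> space D"
        using measurable_space[OF h] space_M by (auto simp: space_pair_measure)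
    next
      fix E B assume "E \<in> sets ?M" "B \<in> sets D"
      then have EB: "E \<times> B \<in> sets (?M \<Otimes>\<^sub>M D)" by auto
      have "h -` (E \<times> B) \<inter> space ?M =
            (\<lambda>x. emeasure (return (Q \<Otimes>\<^sub>M D) (h x)) (E \<times> B)) -` {1} \<inter> space ?M"
        using emeasure_eq[OF EB] by (auto simp: indicator_def)
      also have "\<dots> \<in> sets ?M"
        using kernel_measurable EB by (auto intro: measurable_sets)
      finally show "h -` (E \<times> B) \<inter> space ?M \<in> sets ?M" .
    qed
  next
    assume "h \<in> ?M \<rightarrow>\<^sub>M ?M \<Otimes>\<^sub>M D"
    then show "\<forall>C \<in> sets (?M \<Otimes>\<^sub>M D).
      (\<lambda>x. emeasure (return (Q \<Otimes>\<^sub>M D) (h x)) C) \<in> borel_measurable ?M"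
      using emeasure_eq by (simp add: measurable_compose[OF _ borel_measurable_indicator])
  qed
  with True show ?thesis
    unfolding kernel_invariant_subalgebra_def by blast
qed

definition future_observation_sets ::
  "'q measure \<Rightarrow> 'd measure \<Rightarrow> ('q \<Rightarrow> 'q) \<Rightarrow> ('q \<Rightarrow> 'd) \<Rightarrow> 'q set set" where
  "future_observation_sets Q D f g =
     (\<Union>k\<in>{1::nat..}. {(g \<circ> (f ^^ k)) -` B \<inter> space Q | B. B \<in> sets D})"

lemma future_observation_sets_subset_Pow: "future_observation_sets Q D f g \<subseteq> Pow (space Q)"
  unfolding future_observation_sets_def by auto

lemma
  shows sets_sigma_future_observation:
      "sets (sigma (space Q) (sigma_sets (space Q) (future_observation_sets Q D f g))) =
       sigma_sets (space Q) (future_observation_sets Q D f g)"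
    and space_sigma_future_observation:
      "space (sigma (space Q) (sigma_sets (space Q) (future_observation_sets Q D f g))) = space Q"
  using sigma_algebra_sigma_sets[OF future_observation_sets_subset_Pow[of Q D f g]]
  by (simp_all add: sigma_algebra.sets_measure_of_eq sigma_algebra.space_measure_of_eq)

lemma future_observation_sets_subset_sets:
  assumes "f \<in> Q \<rightarrow>\<^sub>M Q" and "g \<in> Q \<rightarrow>\<^sub>M D"
  shows "sigma_sets (space Q) (future_observation_sets Q D f g) \<subseteq> sets Q"
proof -
  have "f ^^ k \<in> Q \<rightarrow>\<^sub>M Q" for k
    by (induction k) (auto intro: measurable_compose[OF _ assms(1)])
  then have "future_observation_sets Q D f g \<subseteq> sets Q"
    unfolding future_observation_sets_def using assms(2) by (auto intro: measurable_sets)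
  then show ?thesis
    by (rule sets.sigma_sets_subset)
qed

lemma vimage_future_observation:
  assumes "f \<in> space Q \<rightarrow> space Q"
  shows "f -` ((g \<circ> (f ^^ k)) -` B \<inter> space Q) \<inter> space Q = (g \<circ> (f ^^ Suc k)) -` B \<inter> space Q"
  using assms by (auto simp: funpow_Suc_right simp del: funpow.simps)

lemma measurable_future_shift:
  assumes "f \<in> space Q \<rightarrow> space Q"
  shows "f \<in> sigma (space Q) (sigma_sets (space Q) (future_observation_sets Q D f g))
           \<rightarrow>\<^sub>M sigma (space Q) (sigma_sets (space Q) (future_observation_sets Q D f g))"
proof -
  let ?G = "future_observation_sets Q D f g"
  let ?M = "sigma (space Q) (sigma_sets (space Q) ?G)"
  have "f \<in> ?M \<rightarrow>\<^sub>M sigma (space Q) ?G"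
  proof (rule measurable_measure_of[OF future_observation_sets_subset_Pow])
    show "f \<in> space ?M \<rightarrow> space Q"
      using assms by (simp add: space_sigma_future_observation)
    fix E assume "E \<in> ?G"
    then obtain k B where B: "B \<in> sets D" and E: "E = (g \<circ> (f ^^ k)) -` B \<inter> space Q"
      unfolding future_observation_sets_def by auto
    have "f -` E \<inter> space Q = (g \<circ> (f ^^ Suc k)) -` B \<inter> space Q"
      by (simp only: E vimage_future_observation[OF assms])
    also have "\<dots> \<in> ?G"
      unfolding future_observation_sets_def using B by (intro UN_I[of "Suc k"]) auto
    finally show "f -` E \<inter> space ?M \<in> sets ?M"
      unfolding sets_sigma_future_observation space_sigma_future_observation
      by (rule sigma_sets.Basic)
  qed
  moreover have "sets (sigma (space Q) ?G) = sets ?M"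
    using future_observation_sets_subset_Pow[of Q D f g]
    by (simp add: sets_sigma_future_observation)
  ultimately show ?thesis
    using measurable_cong_sets[OF refl] by blast
qed

lemma measurable_future_observation:
  assumes "f \<in> space Q \<rightarrow> space Q" and "g \<in> space Q \<rightarrow> space D"
  shows "g \<circ> f \<in> sigma (space Q) (sigma_sets (space Q) (future_observation_sets Q D f g)) \<rightarrow>\<^sub>M D"
proof (rule measurableI)
  let ?F = "sigma_sets (space Q) (future_observation_sets Q D f g)"
  show "(g \<circ> f) x \<in> space D" if "x \<in> space (sigma (space Q) ?F)" for x
    using assms that by (auto simp: space_sigma_future_observation)
  fix B assume "B \<in> sets D"
  then have "(g \<circ> (f ^^ 1)) -` B \<inter> space Q \<in> future_observation_sets Q D f g"
    unfolding future_observation_sets_def by (intro UN_I[of 1]) auto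
  then show "(g \<circ> f) -` B \<inter> space (sigma (space Q) ?F) \<in> sets (sigma (space Q) ?F)"
    by (auto simp: sets_sigma_future_observation space_sigma_future_observation)
qed

lemma future_observation_sets_minimal:
  assumes A: "sigma_algebra (space Q) A"
    and f: "f \<in> sigma (space Q) A \<rightarrow>\<^sub>M sigma (space Q) A"
    and gf: "g \<circ> f \<in> sigma (space Q) A \<rightarrow>\<^sub>M D"
  shows "sigma_sets (space Q) (future_observation_sets Q D f g) \<subseteq> A"
proof -
  have sets_M: "sets (sigma (space Q) A) = A" and space_M: "space (sigma (space Q) A) = space Q"
    using A by (simp_all add: sigma_algebra.sets_measure_of_eq sigma_algebra.space_measure_of_eq)
  have f_space: "f \<in> space Q \<rightarrow> space Q"
    using measurable_space[OF f] space_M by auto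
  have "(g \<circ> (f ^^ Suc k)) -` B \<inter> space Q \<in> A" if "B \<in> sets D" for k B
  proof (induction k)
    case 0
    show ?case using measurable_sets[OF gf that] sets_M space_M by (simp add: comp_def)
  next
    case (Suc k)
    then have "(g \<circ> (f ^^ Suc k)) -` B \<inter> space Q \<in> sets (sigma (space Q) A)"
      by (simp only: sets_M)
    from measurable_sets[OF f this]
    have "f -` ((g \<circ> (f ^^ Suc k)) -` B \<inter> space Q) \<inter> space Q \<in> A"
      by (simp only: sets_M space_M)
    then show ?case
      unfolding vimage_future_observation[OF f_space] .
  qed
  then have "future_observation_sets Q D f g \<subseteq> A"
    unfolding future_observation_sets_def by (auto dest!: Suc_le_D)
  then show ?thesis
    by (rule sigma_algebra.sigma_sets_subset[OF A])
qed

lemma kernel_invariant_subalgebra_return_orbit_iff: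
  assumes "f \<in> Q \<rightarrow>\<^sub>M Q" and "g \<in> Q \<rightarrow>\<^sub>M D"
  shows "kernel_invariant_subalgebra Q D (\<lambda>x. return (Q \<Otimes>\<^sub>M D) (f x, g (f x))) A \<longleftrightarrow>
    sigma_algebra (space Q) A \<and> A \<subseteq> sets Q \<and>
    f \<in> sigma (space Q) A \<rightarrow>\<^sub>M sigma (space Q) A \<and> g \<circ> f \<in> sigma (space Q) A \<rightarrow>\<^sub>M D"
proof -
  have "(\<lambda>x. (f x, g (f x))) \<in> Q \<rightarrow>\<^sub>M Q \<Otimes>\<^sub>M D"
    using assms by measurable
  then show ?thesis
    by (simp add: kernel_invariant_subalgebra_return_iff measurable_pair_iff comp_def)
qed

theorem theorem4p2:
  fixes Q :: "'q measure" and D :: "'d measure"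
    and f :: "'q \<Rightarrow> 'q" and g :: "'q \<Rightarrow> 'd"
  assumes f: "f \<in> Q \<rightarrow>\<^sub>M Q" and g: "g \<in> Q \<rightarrow>\<^sub>M D"
  shows "sigmaQ Q D (\<lambda>x. return (Q \<Otimes>\<^sub>M D) (f x, g (f x))) =
         sigma_sets (space Q)
           (\<Union>k\<in>{1::nat..}. {(g \<circ> (f ^^ k)) -` B \<inter> space Q | B. B \<in> sets D})"
proof -
  have f_space: "f \<in> space Q \<rightarrow> space Q" and g_space: "g \<in> space Q \<rightarrow> space D"
    using f g by (auto intro: measurable_space)
  have "sigmaQ Q D (\<lambda>x. return (Q \<Otimes>\<^sub>M D) (f x, g (f x))) =
        sigma_sets (space Q) (future_observation_sets Q D f g)"
  proof (rule sigmaQ_eqI)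
    show "kernel_invariant_subalgebra Q D (\<lambda>x. return (Q \<Otimes>\<^sub>M D) (f x, g (f x)))
            (sigma_sets (space Q) (future_observation_sets Q D f g))"
      unfolding kernel_invariant_subalgebra_return_orbit_iff[OF f g]
      using sigma_algebra_sigma_sets[OF future_observation_sets_subset_Pow]
        future_observation_sets_subset_sets[OF f g]
        measurable_future_shift[OF f_space] measurable_future_observation[OF f_space g_space]
      by blast
  qed (simp add: kernel_invariant_subalgebra_return_orbit_iff[OF f g] future_observation_sets_minimal)
  then show ?thesis
    unfolding future_observation_sets_def .
qed

end
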